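(* For $q\in\{4,5\}$, the natural action of $\mathrm{PGL}_2(\mathbb{F}_q)$ on the projective line $\mathbb{P}^1(\mathbb{F}_q)$ cannot be sequenced.
   Context: $\mathrm{PGL}_2(\mathbb{F}_q)$ is the quotient of $\mathrm{GL}_2(\mathbb{F}_q)$ by the nonzero scalar matrices; it acts on $\mathbb{P}^1(\mathbb{F}_q)=\mathbb{F}_q\cup\{\infty\}$ by fractional linear transformations $z\mapsto (az+b)/(cz+d)$, and this action is sharply $3$-transitive (for any two ordered triples of distinct points there is exactly one group element mapping the first to the second). For a group $G$ acting sharply $k$-transitively on an $n$-element set $X$, a sequencing of $X$ is an enumeration $(x_1,\ldots,x_n)$ of all elements of $X$ such that the $n-k$ tuples $(x_1,\ldots,x_{k+1}),\ldots,(x_{n-k},\ldots,x_n)$ lie in pairwise distinct orbits of $G$ acting coordinatewise on ordered $(k+1)$-tuples of distinct elements of $X$. Here $n=q+1$ and $k=3$. *)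

theory Defs
  imports Main
begin

text \<open>The projective line over a field 'a is modelled as 'a option:
  None is the point at infinity, Some z the affine point z.\<close>

definition mobius :: "'a::field \<Rightarrow> 'a \<Rightarrow> 'a \<Rightarrow> 'a \<Rightarrow> 'a option \<Rightarrow> 'a option" where
  "mobius a b c d p =
     (case p of
        None \<Rightarrow> (if c = 0 then None else Some (a / c))
      | Some z \<Rightarrow> (if c * z + d = 0 then None else Some ((a * z + b) / (c * z + d))))"

text \<open>PGL_2 as the group of permutations of the projective line given by
  fractional linear transformations (scalar matrices act trivially).\<close>

definition PGL2 :: "('a::field option \<Rightarrow> 'a option) set" where
  "PGL2 = {mobius a b c d | a b c d. a * d - b * c \<noteq> 0}"

definition sequencing :: "('b \<Rightarrow> 'b) set \<Rightarrow> nat \<Rightarrow> 'b list \<Rightarrow> bool" where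
  "sequencing G k xs \<longleftrightarrow>
     distinct xs \<and> set xs = UNIV \<and>
     (\<forall>i j. i < j \<and> j < length xs - k \<longrightarrow>
        \<not> (\<exists>g\<in>G. map g (take (k + 1) (drop i xs)) = take (k + 1) (drop j xs)))"

end

theory Submission
  imports Defs "HOL-Library.Cardinality" "HOL-Number_Theory.Residues"
begin

(* Since PGL_2(F_q) is 3-transitive, a sequencing can be moved by a group element to one
   starting with \<infinity>, 0, 1; its remaining q - 2 points then enumerate F_q - {0, 1}.
   For q = 4 there are 2 such enumerations and for q = 5 there are 6, and in each of them an
   explicit fractional linear map carries one window of four consecutive points onto another,
   so two windows lie in the same orbit. *)

lemma mobius_mobius:
  fixes a b c d a' b' c' d' :: "'a::field"
  assumes det: "a' * d' - b' * c' \<noteq> 0"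
  shows "mobius a b c d (mobius a' b' c' d' p) =
    mobius (a*a' + b*c') (a*b' + b*d') (c*a' + d*c') (c*b' + d*d') p"
proof (cases p)
  case None
  show ?thesis
  proof (cases "c' = 0")
    case True
    then have "a' \<noteq> 0" using det by auto
    then show ?thesis using None True by (auto simp: mobius_def)
  next
    case False
    have "c * (a' / c') + d = (c*a' + d*c') / c'" "a * (a' / c') + b = (a*a' + b*c') / c'"
      using False by (simp_all add: field_simps)
    then show ?thesis using None False by (auto simp: mobius_def)
  qed
next
  case (Some z)
  show ?thesis
  proof (cases "c' * z + d' = 0")
    case True
    then have "d' = - c' * z" by (simp add: eq_neg_iff_add_eq_0 add.commute)
    then have "a' * d' - b' * c' = - c' * (a' * z + b')"
      and num: "(a*a' + b*c') * z + (a*b' + b*d') = a * (a' * z + b')"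
      and den: "(c*a' + d*c') * z + (c*b' + d*d') = c * (a' * z + b')"
      by (simp_all add: algebra_simps)
    then have "a' * z + b' \<noteq> 0" using det by auto
    then show ?thesis using Some True by (simp add: mobius_def num den)
  next
    case False
    let ?w = "(a' * z + b') / (c' * z + d')"
    have "c * ?w + d = ((c*a' + d*c') * z + (c*b' + d*d')) / (c' * z + d')"
      "a * ?w + b = ((a*a' + b*c') * z + (a*b' + b*d')) / (c' * z + d')"
      using False by (simp_all add: field_simps)
    then show ?thesis using Some False by (simp add: mobius_def)
  qed
qed

lemma mobius_scalar: "k \<noteq> 0 \<Longrightarrow> mobius k 0 0 k p = p"
  by (cases p) (auto simp: mobius_def)

lemma mobius_adjugate_mobius:
  fixes a b c d :: "'a::field"
  assumes "a * d - b * c \<noteq> 0"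
  shows "mobius d (-b) (-c) a (mobius a b c d p) = p"
proof -
  have "mobius d (-b) (-c) a (mobius a b c d p) = mobius (a*d - b*c) 0 0 (a*d - b*c) p"
    using mobius_mobius[OF assms] by (simp add: algebra_simps)
  also have "\<dots> = p"
    using assms by (rule mobius_scalar)
  finally show ?thesis .
qed

lemma mobius_in_PGL2: "a * d - b * c \<noteq> 0 \<Longrightarrow> mobius a b c d \<in> PGL2"
  unfolding PGL2_def by blast

lemma PGL2_comp:
  assumes "f \<in> PGL2" "g \<in> PGL2"
  shows "f \<circ> g \<in> PGL2"
proof -
  obtain a b c d where f: "f = mobius a b c d" "a * d - b * c \<noteq> 0"
    using assms(1) unfolding PGL2_def by blast
  obtain a' b' c' d' where g: "g = mobius a' b' c' d'" "a' * d' - b' * c' \<noteq> 0"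
    using assms(2) unfolding PGL2_def by blast
  have "(a*a' + b*c') * (c*b' + d*d') - (a*b' + b*d') * (c*a' + d*c') = (a*d - b*c) * (a'*d' - b'*c')"
    by (simp add: algebra_simps)
  then have "mobius (a*a' + b*c') (a*b' + b*d') (c*a' + d*c') (c*b' + d*d') \<in> PGL2"
    using f g by (simp add: mobius_in_PGL2)
  moreover have "f \<circ> g = mobius (a*a' + b*c') (a*b' + b*d') (c*a' + d*c') (c*b' + d*d')"
    using f g by (simp add: fun_eq_iff mobius_mobius)
  ultimately show ?thesis by simp
qed

lemma PGL2_inverse:
  assumes "g \<in> PGL2"
  shows "\<exists>h\<in>PGL2. h \<circ> g = id \<and> g \<circ> h = id"
proof -
  obtain a b c d where g: "g = mobius a b c d" and det: "a * d - b * c \<noteq> 0"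
    using assms unfolding PGL2_def by blast
  have det': "d * a - (-b) * (-c) \<noteq> 0" using det by (simp add: algebra_simps)
  show ?thesis
  proof (intro bexI conjI)
    show "mobius d (-b) (-c) a \<in> PGL2" using det' by (rule mobius_in_PGL2)
    show "mobius d (-b) (-c) a \<circ> g = id"
      using mobius_adjugate_mobius[OF det] by (simp add: g fun_eq_iff)
    show "g \<circ> mobius d (-b) (-c) a = id"
      using mobius_adjugate_mobius[OF det'] by (simp add: g fun_eq_iff)
  qed
qed

lemma PGL2_moves_to_infinity: "\<exists>g\<in>PGL2. g p = (None :: 'a::field option)"
proof (cases p)
  case None
  then show ?thesis
    by (intro bexI[of _ "mobius 1 0 0 1"]) (simp_all add: mobius_def mobius_in_PGL2)
next
  case (Some x)
  then show ?thesis
    by (intro bexI[of _ "mobius 0 1 1 (-x)"]) (simp_all add: mobius_def mobius_in_PGL2)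
qed

lemma PGL2_three_transitive:
  fixes p1 p2 p3 :: "'a::field option"
  assumes "distinct [p1, p2, p3]"
  shows "\<exists>g\<in>PGL2. g p1 = None \<and> g p2 = Some 0 \<and> g p3 = Some 1"
proof -
  obtain f where f: "f \<in> PGL2" "f p1 = None" using PGL2_moves_to_infinity by blast
  then have "inj f" using PGL2_inverse by (metis o_bij bij_is_inj)
  then have "f p2 \<noteq> None" "f p3 \<noteq> None" "f p2 \<noteq> f p3"
    using assms f(2) by (metis distinct_length_2_or_more inj_eq)+
  then obtain y z where y: "f p2 = Some y" and z: "f p3 = Some z" and "y \<noteq> z"
    by auto
  then have affine: "mobius 1 (-y) 0 (z - y) \<in> PGL2"
    "mobius 1 (-y) 0 (z - y) None = None"
    "mobius 1 (-y) 0 (z - y) (Some y) = Some 0"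
    "mobius 1 (-y) 0 (z - y) (Some z) = Some 1"
    by (simp_all add: mobius_in_PGL2 mobius_def)
  show ?thesis
    using PGL2_comp[OF affine(1) f(1)] affine f(2) y z by (intro bexI) simp_all
qed

lemma not_sequencing_if_windows_related:
  assumes "g \<in> G" "i < j" "j < length xs - k"
    and "map g (take (k + 1) (drop i xs)) = take (k + 1) (drop j xs)"
  shows "\<not> sequencing G k xs"
  using assms unfolding sequencing_def by blast

lemma sequencing_map:
  assumes seq: "sequencing G k xs"
    and comp: "\<And>f g. f \<in> G \<Longrightarrow> g \<in> G \<Longrightarrow> f \<circ> g \<in> G"
    and "g \<in> G" "h \<in> G" and hg: "h \<circ> g = id" and "g \<circ> h = id"
  shows "sequencing G k (map g xs)"
  unfolding sequencing_def
proof (intro conjI allI impI notI)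
  have "bij g" using hg \<open>g \<circ> h = id\<close> by (rule o_bij)
  then show "distinct (map g xs)" "set (map g xs) = UNIV"
    using seq by (simp_all add: sequencing_def distinct_map bij_is_surj inj_on_subset[OF bij_is_inj])
next
  fix i j
  let ?window = "\<lambda>i. take (k + 1) (drop i xs)"
  assume ij: "i < j \<and> j < length (map g xs) - k"
    and "\<exists>f\<in>G. map f (take (k + 1) (drop i (map g xs))) = take (k + 1) (drop j (map g xs))"
  then obtain f where "f \<in> G" and f: "map (f \<circ> g) (?window i) = map g (?window j)"
    by (auto simp: take_map drop_map)
  have "map (h \<circ> f \<circ> g) (?window i) = map h (map (f \<circ> g) (?window i))"
    by simp
  also have "\<dots> = map (h \<circ> g) (?window j)"
    using f by simp
  finally have "map (h \<circ> f \<circ> g) (?window i) = ?window j"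
    using hg by simp
  moreover have "h \<circ> f \<circ> g \<in> G" using comp \<open>f \<in> G\<close> \<open>g \<in> G\<close> \<open>h \<in> G\<close> by blast
  ultimately show False
    using not_sequencing_if_windows_related seq ij by (metis length_map)
qed

lemma sequencing_length: "sequencing G k xs \<Longrightarrow> length xs = CARD('b)"
  for xs :: "'b::finite list"
  unfolding sequencing_def by (metis distinct_card)

lemma sequencing_PGL2_normalize:
  fixes xs :: "'a::{field, finite} option list"
  assumes seq: "sequencing PGL2 k xs"
  shows "\<exists>rest. sequencing PGL2 k (None # Some 0 # Some (1::'a) # rest)"
proof -
  have "card {0::'a, 1} \<le> CARD('a)" by (rule card_mono) auto
  then have "3 \<le> length xs" using sequencing_length[OF seq] by simp
  then obtain p1 p2 p3 rest where xs: "xs = p1 # p2 # p3 # rest"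
    by (metis Suc_le_length_iff numeral_3_eq_3)
  then have "distinct [p1, p2, p3]" using seq by (simp add: sequencing_def)
  then obtain g where "g \<in> PGL2" and g: "g p1 = None" "g p2 = Some 0" "g p3 = Some 1"
    using PGL2_three_transitive by blast
  moreover obtain h where "h \<in> PGL2" "h \<circ> g = id" "g \<circ> h = id"
    using PGL2_inverse[OF \<open>g \<in> PGL2\<close>] by blast
  ultimately have "sequencing PGL2 k (map g xs)"
    using sequencing_map[OF seq] PGL2_comp by blast
  then have "sequencing PGL2 k (None # Some 0 # Some 1 # map g rest)"
    using g xs by simp
  then show ?thesis ..
qed

lemma card_Compl_zero_one: "card (- {0, 1 :: 'a::{zero_neq_one, finite}}) = CARD('a) - 2"
  by (simp add: Compl_eq_Diff_UNIV card_Diff_subset)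

lemma sequencing_normalized_tail:
  fixes rest :: "'a::{zero_neq_one, finite} option list"
  assumes "sequencing G k (None # Some 0 # Some 1 # rest)"
  obtains ys where "rest = map Some ys" "distinct ys" "set ys = - {0, 1}"
    "length ys = CARD('a) - 2"
proof -
  have "None \<notin> set rest" using assms by (simp add: sequencing_def)
  then obtain ys where ys: "rest = map Some ys"
    by (metis ex_map_conv not_None_eq)
  have "distinct ys" "set ys = - {0, 1}"
    using assms by (auto simp: sequencing_def ys distinct_map)
  moreover from this have "length ys = CARD('a) - 2"
    by (metis distinct_card card_Compl_zero_one)
  ultimately show ?thesis using ys that by blast
qed

lemma CHAR_eq_if_card_eq_prime_power:
  assumes "CARD('a::{field, finite}) = p ^ n" "prime p" "n > 0"
  shows "CHAR('a) = p"
proof -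
  have "prime CHAR('a)" by (simp add: prime_CHAR_semidom finite_imp_CHAR_pos)
  moreover have "CHAR('a) dvd p ^ n" using CHAR_dvd_CARD assms(1) by metis
  ultimately show ?thesis using assms(2) by (metis prime_dvd_power primes_dvd_imp_eq)
qed

lemma numeral_eq_iff_cong_CHAR:
  "(numeral m :: 'a::ring_1) = numeral n \<longleftrightarrow> [numeral m = numeral n] (mod CHAR('a))"
  by (metis of_nat_eq_iff_cong_CHAR of_nat_numeral)

lemma numeral_eq_one_iff_cong_CHAR:
  "(numeral m :: 'a::ring_1) = 1 \<longleftrightarrow> [numeral m = 1] (mod CHAR('a))"
  "(1 :: 'a) = numeral m \<longleftrightarrow> [1 = numeral m] (mod CHAR('a))"
  by (metis of_nat_eq_iff_cong_CHAR of_nat_numeral of_nat_1)+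

lemma numeral_eq_zero_iff_CHAR_dvd:
  "(numeral m :: 'a::ring_1) = 0 \<longleftrightarrow> CHAR('a) dvd numeral m"
  by (metis of_nat_eq_0_iff_char_dvd of_nat_numeral)

lemma four_element_field_relations:
  fixes x y :: "'a::field"
  assumes two: "(2::'a) = 0" and elements: "\<And>t. t \<in> {0, 1, x, y}"
    and distinct: "distinct [0, 1, x, y]"
  shows "x + 1 = y" "x * x = y" "x * y = 1"
proof -
  have char2: "t + t = 0" for t :: 'a
  proof -
    have "t + t = 2 * t" by (rule mult_2[symmetric])
    then show ?thesis by (simp add: two)
  qed
  have "x + 1 \<noteq> 0"
  proof
    assume "x + 1 = 0"
    have "x = x + (1 + 1)" using char2[of 1] by simp
    also have "\<dots> = (x + 1) + 1" by (rule add.assoc[symmetric])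
    also have "\<dots> = 1" using \<open>x + 1 = 0\<close> by simp
    finally show False using distinct by simp
  qed
  then show "x + 1 = y"
    using elements[of "x + 1"] distinct by auto
  have "x * x \<noteq> 1"
  proof
    assume "x * x = 1"
    have "(x + 1) * (x + 1) = x * x + (x + x) + 1" by (simp add: algebra_simps)
    also have "\<dots> = 0" using \<open>x * x = 1\<close> char2[of x] char2[of 1] by simp
    finally show False using \<open>x + 1 \<noteq> 0\<close> by simp
  qed
  then show "x * x = y"
    using elements[of "x * x"] distinct by auto
  have "x * y = x * x + x" by (simp flip: \<open>x + 1 = y\<close> add: algebra_simps)
  also have "\<dots> = 1 + (x + x)" using \<open>x * x = y\<close> \<open>x + 1 = y\<close> by (simp add: algebra_simps)
  finally show "x * y = 1" using char2 by simp
qed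

lemma not_sequencing_PGL2_card_4:
  fixes rest :: "'a::{field, finite} option list"
  assumes card: "CARD('a) = 4"
  shows "\<not> sequencing PGL2 3 (None # Some 0 # Some 1 # rest)"
proof
  assume seq: "sequencing PGL2 3 (None # Some 0 # Some 1 # rest)"
  obtain ys where rest: "rest = map Some ys" and "distinct ys" and ys: "set ys = - {0, 1}"
    and "length ys = 2"
    using sequencing_normalized_tail[OF seq] card by auto
  then obtain x y where "ys = [x, y]"
    by (auto simp: numeral_2_eq_2 length_Suc_conv)
  then have xy: "distinct [0, 1, x, y]" and all: "t \<in> {0, 1, x, y}" for t
    using ys \<open>distinct ys\<close> by auto
  have "CHAR('a) = 2"
    using CHAR_eq_if_card_eq_prime_power[of 2 2] card by simp
  then have "(2::'a) = 0" by (simp add: numeral_eq_zero_iff_CHAR_dvd)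
  then have xy_rel: "x + 1 = y" "x * x = y" "x * y = 1"
    using four_element_field_relations[OF _ all xy] by blast+
  have g01: "mobius 0 1 x 1 None = Some 0" "mobius 0 1 x 1 (Some 0) = Some 1"
    using xy by (simp_all add: mobius_def)
  have "1 / y = x" "1 / x = y"
    using xy_rel(3) xy by (simp_all add: divide_eq_eq mult.commute)
  have "y + 1 = x"
    using four_element_field_relations(1)[of y x] \<open>2 = 0\<close> all xy by auto
  have g1x: "mobius 0 1 x 1 (Some 1) = Some x" "mobius 0 1 x 1 (Some x) = Some y"
    using xy xy_rel \<open>1 / y = x\<close> \<open>1 / x = y\<close> \<open>y + 1 = x\<close> by (simp_all add: mobius_def)
  have "mobius 0 1 x 1 \<in> PGL2"
    using xy by (simp add: mobius_in_PGL2)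
  then show False
    using not_sequencing_if_windows_related[of _ _ 0 1 "None # Some 0 # Some 1 # rest" 3] seq g01 g1x
    by (simp add: rest \<open>ys = [x, y]\<close>)
qed

lemma not_sequencing_PGL2_card_5:
  fixes rest :: "'a::{field, finite} option list"
  assumes card: "CARD('a) = 5"
  shows "\<not> sequencing PGL2 3 (None # Some 0 # Some 1 # rest)"
proof
  assume seq: "sequencing PGL2 3 (None # Some 0 # Some 1 # rest)"
  define xs where "xs = None # Some 0 # Some 1 # rest"
  obtain ys where rest: "rest = map Some ys" and "distinct ys" and ys: "set ys = - {0, 1}"
    and "length ys = 3"
    using sequencing_normalized_tail[OF seq] card by auto
  then obtain x y z where "ys = [x, y, z]"
    by (auto simp: numeral_3_eq_3 length_Suc_conv)
  then have xyz: "rest = [Some x, Some y, Some z]"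
    by (simp add: rest)
  have "CHAR('a) = 5"
    using CHAR_eq_if_card_eq_prime_power[of 5 1] card by simp
  note char_5 = this numeral_eq_iff_cong_CHAR numeral_eq_one_iff_cong_CHAR
    numeral_eq_zero_iff_CHAR_dvd cong_def
  have clash: False
    if "map (mobius a b c d) (take 4 (drop i xs)) = take 4 (drop j xs)"
      "a * d - b * c \<noteq> 0" "i < j" "j < 3"
    for a b c d :: 'a and i j :: nat
    using not_sequencing_if_windows_related[OF mobius_in_PGL2[OF that(2)], of i j xs 3] that seq
    by (simp add: xs_def xyz)
  note window_simps = xs_def xyz mobius_def char_5 divide_eq_eq
  have "{x, y, z} = - {0, 1}"
    using ys \<open>ys = [x, y, z]\<close> by simp
  then have "(2::'a) \<in> {x, y, z}" "(3::'a) \<in> {x, y, z}" "(4::'a) \<in> {x, y, z}"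
    by (simp_all add: char_5)
  moreover have "distinct [x, y, z]"
    using \<open>distinct ys\<close> \<open>ys = [x, y, z]\<close> by simp
  moreover have "(2::'a) \<noteq> 3" "(2::'a) \<noteq> 4" "(3::'a) \<noteq> 4"
    by (simp_all add: char_5)
  ultimately consider "x = 2" "y = 3" "z = 4" | "x = 2" "y = 4" "z = 3"
    | "x = 3" "y = 2" "z = 4" | "x = 3" "y = 4" "z = 2"
    | "x = 4" "y = 2" "z = 3" | "x = 4" "y = 3" "z = 2"
    by auto
  then show False
  proof cases
    case 1
    show False by (rule clash[of 1 1 0 1 1 2]) (simp_all add: 1 window_simps)
  next
    case 2
    show False by (rule clash[of 1 2 1 1 0 2]) (simp_all add: 2 window_simps)
  next
    case 3
    show False by (rule clash[of 1 3 1 1 0 2]) (simp_all add: 3 window_simps)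
  next
    case 4
    show False by (rule clash[of 0 1 1 1 0 1]) (simp_all add: 4 window_simps)
  next
    case 5
    show False by (rule clash[of 0 1 3 1 0 1]) (simp_all add: 5 window_simps)
  next
    case 6
    show False by (rule clash[of 1 3 1 2 0 2]) (simp_all add: 6 window_simps)
  qed
qed

theorem mainTheorem5:
  assumes "card (UNIV :: 'a::{field, finite} set) = 4 \<or> card (UNIV :: 'a set) = 5"
  shows "\<not> (\<exists>xs. sequencing (PGL2 :: ('a option \<Rightarrow> 'a option) set) 3 xs)"
proof
  assume "\<exists>xs. sequencing (PGL2 :: ('a option \<Rightarrow> 'a option) set) 3 xs"
  then obtain rest where "sequencing PGL2 3 (None # Some 0 # Some (1::'a) # rest)"
    using sequencing_PGL2_normalize by blast
  then show False
    using assms not_sequencing_PGL2_card_4 not_sequencing_PGL2_card_5 by blast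
qed

end
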